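(* Let $n\ge1$, let $I\subset\mathbb R$ be an interval, $x_*\in I$, and $y\in C^{2n+1,1}(I)$ with $$y(x)=y_*+a_{2n+1}(x-x_* )^{2n+1}+a_{2n+2}(x)(x-x_* )^{2n+2}\qquad(x\in I),$$ where $y_*\in\mathbb R$, $a_{2n+1}>0$ is a constant and $a_{2n+2}:I\to\mathbb R$ is continuous. Let $$J:=\Bigl\{x\in I:\ |a_{2n+2}(x)|^{2n+1}|y(x)-y_*|<a_{2n+1}^{2n+2}R_n^{2n+1},\ \ \tfrac{(2n+2)a_{2n+2}(x)(x-x_* )}{(2n+1)a_{2n+1}}>-1\Bigr\},$$ and let $\tilde J$ be the connected component of $J$ containing $x_*$. Then for all $x\in\tilde J$, $$x-x_*=\Bigl(\tfrac{y(x)-y_*}{a_{2n+1}}\Bigr)^{\frac1{2n+1}}\sum_{j=0}^\infty\Bigl(\tfrac{-a_{2n+2}(x)}{(2n+1)a_{2n+1}}\Bigr)^jc_j^n\Bigl(\tfrac{y(x)-y_*}{a_{2n+1}}\Bigr)^{\frac j{2n+1}}.$$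
   Context: $s^{1/(2n+1)}$ is the real odd root. The sequence $(c_j^n)_{j\ge0}$ is defined recursively by $c_0^n:=1$ and $c_m^n:=\sum_{\ell_1+\dots+\ell_{2n+2}=m-1}c^n_{\ell_1}\cdots c^n_{\ell_{2n+2}}-\tfrac1{2n+1}\sum_{j_1+\dots+j_{2n+1}=m,\ 0\le j_i\le m-1}c^n_{j_1}\cdots c^n_{j_{2n+1}}$ (indices nonnegative integers). $R_n:=\frac{2n+1}{\limsup_{j\to\infty}|c_j^n|^{1/j}}$, which is positive (the power series $\bar y_n(z)=\sum_j\frac{(-1)^j}{(2n+1)^j}c_j^nz^j$ has radius of convergence $R_n>0$, and $y_0(x)=x^{1/(2n+1)}\bar y_n(x^{1/(2n+1)})$ solves $-x+y_0^{2n+1}+y_0^{2n+2}=0$). *)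

theory Defs
  imports "HOL-Analysis.Analysis"
begin

definition compositions :: "nat \<Rightarrow> nat \<Rightarrow> (nat \<Rightarrow> nat) set" where
  "compositions k m = {l \<in> PiE {..<k} (\<lambda>_. {..m}). (\<Sum>i<k. l i) = m}"

(* one step of the recursion for c^n_m, given the values g(0..m-1) *)
definition c_step :: "nat \<Rightarrow> (nat \<Rightarrow> real) \<Rightarrow> nat \<Rightarrow> real" where
  "c_step n g m =
     (if m = 0 then 1
      else (\<Sum>l\<in>compositions (2*n+2) (m-1). \<Prod>i<2*n+2. g (l i))
           - 1 / real (2*n+1) *
             (\<Sum>j\<in>{j\<in>compositions (2*n+1) m. \<forall>i<2*n+1. j i \<le> m-1}. \<Prod>i<2*n+1. g (j i)))"

(* c_table n m holds c^n_0, ..., c^n_{m-1} at indices 0..m-1 *)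
primrec c_table :: "nat \<Rightarrow> nat \<Rightarrow> nat \<Rightarrow> real" where
  "c_table n 0 = (\<lambda>_. 0)"
| "c_table n (Suc m) = (c_table n m)(m := c_step n (c_table n m) m)"

definition c_seq :: "nat \<Rightarrow> nat \<Rightarrow> real" where
  "c_seq n j = c_table n (Suc j) j"

(* R_n = (2n+1) / limsup |c^n_j|^(1/j), as an extended real (1/0 = \<infinity>) *)
definition R_rad :: "nat \<Rightarrow> ereal" where
  "R_rad n = ereal (real (2*n+1)) / Limsup sequentially (\<lambda>j. ereal (root j \<bar>c_seq n j\<bar>))"

(* y \<in> C^{k,1}(I): k times differentiable on I (one-sided at endpoints), k-th derivative Lipschitz *)
definition C_k_1 :: "nat \<Rightarrow> real set \<Rightarrow> (real \<Rightarrow> real) \<Rightarrow> bool" where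
  "C_k_1 k I y \<longleftrightarrow> (\<exists>D :: nat \<Rightarrow> real \<Rightarrow> real. (\<forall>x\<in>I. D 0 x = y x) \<and>
      (\<forall>i<k. \<forall>x\<in>I. (D i has_real_derivative D (Suc i) x) (at x within I)) \<and>
      (\<exists>L. L-lipschitz_on I (D k)))"

end

theory Submission
  imports Defs "HOL-Analysis.FPS_Convergence"
begin

text \<open>
  The recursion for \<open>c\<^sup>n\<close> says exactly that the formal power series
  \<open>D(z) = \<Sum>j. (-1/(2n+1))^j c\<^sup>n\<^sub>j z^j\<close> (\<open>c_fps n\<close>) satisfies
  \<open>D^(2n+1) + z D^(2n+2) = 1\<close>, and its radius of convergence is \<open>R\<^sub>n\<close>. Hence
  \<open>\<phi>(z) = z D(z)\<close> solves \<open>h(\<phi>(z)) = z^(2n+1)\<close> for \<open>|z| < R\<^sub>n\<close>, where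
  \<open>h(u) = u^(2n+1) + u^(2n+2)\<close> (\<open>branch_poly n\<close>). The polynomial \<open>h\<close> is strictly increasing
  to the right of its critical point \<open>u\<^sub>c = -(2n+1)/(2n+2)\<close>, and \<open>\<phi>\<close> stays to the right
  of \<open>u\<^sub>c\<close>: \<open>\<phi>\<close> is continuous with \<open>\<phi>(0) = 0\<close>, and at a point where \<open>\<phi> = u\<^sub>c\<close> the derivative of \<open>h \<circ> \<phi>\<close>
  would vanish while that of \<open>z^(2n+1)\<close> does not.

  For \<open>t = x - x\<^sub>*\<close>, \<open>b = a\<^sub>2\<^sub>n\<^sub>+\<^sub>2(x)/a\<^sub>2\<^sub>n\<^sub>+\<^sub>1\<close>, \<open>s = (y(x) - y\<^sub>*)/a\<^sub>2\<^sub>n\<^sub>+\<^sub>1 = t^(2n+1) + b t^(2n+2)\<close>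
  and \<open>z = b s^(1/(2n+1))\<close> we get \<open>h(bt) = b^(2n+1) s = h(\<phi>(z))\<close>. The two conditions
  defining \<open>J\<close> say \<open>|z| < R\<^sub>n\<close> and \<open>bt > u\<^sub>c\<close>, so \<open>bt = \<phi>(z)\<close>, i.e.
  \<open>t = s^(1/(2n+1)) D(z)\<close>.
\<close>

lemma c_table_eq_c_seq: "j < m \<Longrightarrow> c_table n m j = c_seq n j"
  by (induction m) (auto simp: c_seq_def)

lemma c_step_cong:
  assumes "\<And>i. i < m \<Longrightarrow> g i = g' i"
  shows "c_step n g m = c_step n g' m"
proof (cases "m = 0")
  case False
  have "(\<Sum>l\<in>compositions (2*n+2) (m-1). \<Prod>i<2*n+2. g (l i)) =
        (\<Sum>l\<in>compositions (2*n+2) (m-1). \<Prod>i<2*n+2. g' (l i))"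
  proof (intro sum.cong refl prod.cong)
    fix l i assume "l \<in> compositions (2*n+2) (m-1)" "i \<in> {..<2*n+2}"
    then have "l i \<le> m - 1" by (auto simp: compositions_def PiE_def Pi_def)
    then show "g (l i) = g' (l i)" using False assms by simp
  qed
  moreover have "(\<Sum>l\<in>{l\<in>compositions (2*n+1) m. \<forall>i<2*n+1. l i \<le> m-1}. \<Prod>i<2*n+1. g (l i)) =
                 (\<Sum>l\<in>{l\<in>compositions (2*n+1) m. \<forall>i<2*n+1. l i \<le> m-1}. \<Prod>i<2*n+1. g' (l i))"
    using False assms by (intro sum.cong refl prod.cong) auto
  ultimately show ?thesis by (simp add: c_step_def)
qed (simp add: c_step_def)

lemma c_seq_rec: "c_seq n m = c_step n (c_seq n) m"
proof -
  have "c_seq n m = c_step n (c_table n m) m" by (simp add: c_seq_def)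
  also have "\<dots> = c_step n (c_seq n) m" by (rule c_step_cong) (simp add: c_table_eq_c_seq)
  finally show ?thesis .
qed

lemma c_seq_0 [simp]: "c_seq n 0 = 1"
  by (simp add: c_seq_def c_step_def)

lemma finite_compositions: "finite (compositions k m)"
  unfolding compositions_def by (rule finite_subset[of _ "PiE {..<k} (\<lambda>_. {..m})"]) (auto intro: finite_PiE)

lemma bij_betw_compositions_natpermute:
  "bij_betw (\<lambda>l. map l [0..<k]) (compositions k m) (natpermute m k)"
proof (rule bij_betw_byWitness[where f' = "\<lambda>v i. if i < k then v ! i else undefined"])
  show "\<forall>l\<in>compositions k m. (\<lambda>i. if i < k then map l [0..<k] ! i else undefined) = l"
    by (auto simp: compositions_def PiE_def extensional_def)
  show "\<forall>v\<in>natpermute m k. map (\<lambda>i. if i < k then v ! i else undefined) [0..<k] = v"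
  proof
    fix v assume "v \<in> natpermute m k"
    then have "length v = k" by (simp add: natpermute_def)
    then show "map (\<lambda>i. if i < k then v ! i else undefined) [0..<k] = v"
      by (intro nth_equalityI) auto
  qed
  show "(\<lambda>l. map l [0..<k]) ` compositions k m \<subseteq> natpermute m k"
  proof
    fix v assume "v \<in> (\<lambda>l. map l [0..<k]) ` compositions k m"
    then obtain l where l: "l \<in> compositions k m" "v = map l [0..<k]" by auto
    have "sum_list (map l [0..<k]) = sum l {..<k}"
      by (simp add: interv_sum_list_conv_sum_set_nat atLeast0LessThan)
    then show "v \<in> natpermute m k" using l by (simp add: natpermute_def compositions_def)
  qed
  show "(\<lambda>v i. if i < k then v ! i else undefined) ` natpermute m k \<subseteq> compositions k m"
  proof
    fix l assume "l \<in> (\<lambda>v i. if i < k then v ! i else undefined) ` natpermute m k"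
    then obtain v where v: "length v = k" "sum_list v = m" and l: "l = (\<lambda>i. if i < k then v ! i else undefined)"
      by (auto simp: natpermute_def)
    have sum: "(\<Sum>i<k. l i) = m" using v by (simp add: l sum_list_sum_nth atLeast0LessThan)
    have "l i \<le> m" if "i < k" for i
      using member_le_sum[of i "{..<k}" l] that sum by simp
    then show "l \<in> compositions k m"
      using sum by (auto simp: compositions_def PiE_iff l extensional_def)
  qed
qed

lemma fps_nth_power_compositions:
  fixes a :: "'a::comm_ring_1 fps"
  assumes "k \<ge> 1"
  shows "fps_nth (a ^ k) m = (\<Sum>l\<in>compositions k m. \<Prod>i<k. fps_nth a (l i))"
proof -
  obtain k' where k: "k = Suc k'" using assms by (cases k) auto
  then have "{0..k'} = {..<k}" by auto
  then have "fps_nth (a ^ k) m = (\<Sum>v\<in>natpermute m k. \<Prod>i<k. fps_nth a (v ! i))"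
    using fps_power_nth_Suc[of a k' m] k by simp
  also have "\<dots> = (\<Sum>l\<in>compositions k m. \<Prod>i<k. fps_nth a (l i))"
    by (subst sum.reindex_bij_betw[OF bij_betw_compositions_natpermute, symmetric]) simp
  finally show ?thesis .
qed

lemma prod_power_composition:
  fixes q :: "'a::comm_semiring_1"
  assumes "l \<in> compositions k m"
  shows "(\<Prod>i<k. q ^ l i * c (l i)) = q ^ m * (\<Prod>i<k. c (l i))"
  using assms by (simp add: prod.distrib power_sum[symmetric] compositions_def)

lemma fps_nth_power_rescaled:
  fixes q :: "'a::comm_ring_1"
  assumes "k \<ge> 1"
  shows "fps_nth (Abs_fps (\<lambda>j. q ^ j * c j) ^ k) m = q ^ m * (\<Sum>l\<in>compositions k m. \<Prod>i<k. c (l i))"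
  by (simp add: fps_nth_power_compositions[OF assms] sum_distrib_left prod_power_composition)

definition unit_composition :: "nat \<Rightarrow> nat \<Rightarrow> nat \<Rightarrow> nat \<Rightarrow> nat" where
  "unit_composition k m i = (\<lambda>j. if j < k then if j = i then m else 0 else undefined)"

lemma unit_composition_in_compositions:
  assumes "i < k"
  shows "unit_composition k m i \<in> compositions k m"
proof -
  have "(\<Sum>j<k. unit_composition k m i j) = (\<Sum>j<k. if j = i then m else 0)"
    by (intro sum.cong) (auto simp: unit_composition_def)
  with assms show ?thesis
    by (auto simp: compositions_def unit_composition_def PiE_iff extensional_def)
qed

lemma compositions_split:
  assumes "m \<ge> 1"
  shows "compositions k m = {l \<in> compositions k m. \<forall>i<k. l i \<le> m - 1} \<union> unit_composition k m ` {..<k}"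
proof (intro equalityI subsetI)
  fix l assume l: "l \<in> compositions k m"
  show "l \<in> {l \<in> compositions k m. \<forall>i<k. l i \<le> m - 1} \<union> unit_composition k m ` {..<k}"
  proof (cases "\<forall>i<k. l i \<le> m - 1")
    case False
    then obtain i where i: "i < k" "l i > m - 1" by auto
    have sum: "(\<Sum>j<k. l j) = m" and le: "\<And>j. j < k \<Longrightarrow> l j \<le> m"
      using l by (auto simp: compositions_def PiE_def Pi_def)
    then have li: "l i = m" using le[OF i(1)] i(2) assms by linarith
    have "(\<Sum>j<k. l j) = l i + (\<Sum>j\<in>{..<k}-{i}. l j)"
      using i(1) by (intro sum.remove) auto
    then have rest: "(\<Sum>j\<in>{..<k}-{i}. l j) = 0" using sum li by simp
    have "l j = unit_composition k m i j" for j
      using rest li l by (cases "j < k")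
        (auto simp: unit_composition_def compositions_def PiE_def extensional_def)
    then show ?thesis using i by auto
  qed (use l in simp)
qed (auto intro: unit_composition_in_compositions)

lemma sum_compositions_split:
  fixes a :: "nat \<Rightarrow> 'a::comm_semiring_1"
  assumes "m \<ge> 1" and "a 0 = 1"
  shows "(\<Sum>l\<in>compositions k m. \<Prod>i<k. a (l i)) =
         (\<Sum>l\<in>{l\<in>compositions k m. \<forall>i<k. l i \<le> m - 1}. \<Prod>i<k. a (l i)) + of_nat k * a m"
proof -
  define P where "P = {l\<in>compositions k m. \<forall>i<k. l i \<le> m - 1}"
  have disj: "P \<inter> unit_composition k m ` {..<k} = {}"
    using assms(1) by (auto simp: P_def unit_composition_def)
  have inj: "inj_on (unit_composition k m) {..<k}"
  proof (rule inj_onI)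
    fix i i' assume "i \<in> {..<k}" "i' \<in> {..<k}" "unit_composition k m i = unit_composition k m i'"
    then have "unit_composition k m i i = unit_composition k m i' i" by simp
    then show "i = i'" using assms(1) \<open>i \<in> {..<k}\<close> by (auto simp: unit_composition_def split: if_splits)
  qed
  have "(\<Prod>j<k. a (unit_composition k m i j)) = a m" if "i < k" for i
  proof -
    have "(\<Prod>j<k. a (unit_composition k m i j)) = a (unit_composition k m i i) *
            (\<Prod>j\<in>{..<k}-{i}. a (unit_composition k m i j))"
      using that by (intro prod.remove) auto
    also have "(\<Prod>j\<in>{..<k}-{i}. a (unit_composition k m i j)) = 1"
      by (rule prod.neutral) (auto simp: unit_composition_def assms(2))
    finally show ?thesis using that by (simp add: unit_composition_def)
  qed
  then have units: "(\<Sum>l\<in>unit_composition k m ` {..<k}. \<Prod>i<k. a (l i)) = of_nat k * a m"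
    by (simp add: sum.reindex[OF inj])
  have "finite P" using finite_compositions by (simp add: P_def)
  have "compositions k m = P \<union> unit_composition k m ` {..<k}"
    unfolding P_def by (rule compositions_split[OF assms(1)])
  then have "(\<Sum>l\<in>compositions k m. \<Prod>i<k. a (l i)) =
             (\<Sum>l\<in>P. \<Prod>i<k. a (l i)) + (\<Sum>l\<in>unit_composition k m ` {..<k}. \<Prod>i<k. a (l i))"
    using \<open>finite P\<close> disj by (simp add: sum.union_disjoint)
  with units show ?thesis by (simp add: P_def)
qed

definition c_fps :: "nat \<Rightarrow> real fps" where
  "c_fps n = Abs_fps (\<lambda>j. (-1 / real (2*n+1)) ^ j * c_seq n j)"

lemma c_fps_identity: "c_fps n ^ (2*n+1) + fps_X * c_fps n ^ (2*n+2) = 1"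
proof (rule fps_ext)
  fix m
  define q where "q = -1 / real (2*n+1)"
  have c_fps: "c_fps n = Abs_fps (\<lambda>j. q ^ j * c_seq n j)" by (simp add: c_fps_def q_def)
  show "fps_nth (c_fps n ^ (2*n+1) + fps_X * c_fps n ^ (2*n+2)) m = fps_nth 1 m"
  proof (cases m)
    case 0
    then show ?thesis by (simp add: fps_nth_power_0 c_fps_def)
  next
    case (Suc m')
    define A where "A = (\<Sum>l\<in>compositions (2*n+2) (m-1). \<Prod>i<2*n+2. c_seq n (l i))"
    define B where "B = (\<Sum>l\<in>{l\<in>compositions (2*n+1) m. \<forall>i<2*n+1. l i \<le> m-1}. \<Prod>i<2*n+1. c_seq n (l i))"
    have c_m: "c_seq n m = A - 1 / real (2*n+1) * B"
      using c_seq_rec[of n m] Suc by (simp add: c_step_def A_def B_def)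
    have "fps_nth (c_fps n ^ (2*n+1)) m = q ^ m * (\<Sum>l\<in>compositions (2*n+1) m. \<Prod>i<2*n+1. c_seq n (l i))"
      unfolding c_fps by (rule fps_nth_power_rescaled) simp
    also have "(\<Sum>l\<in>compositions (2*n+1) m. \<Prod>i<2*n+1. c_seq n (l i)) = B + real (2*n+1) * c_seq n m"
      unfolding B_def by (rule sum_compositions_split) (use Suc in simp_all)
    finally have odd_power: "fps_nth (c_fps n ^ (2*n+1)) m = q ^ m * (B + real (2*n+1) * c_seq n m)" .
    have even_power: "fps_nth (c_fps n ^ (2*n+2)) (m-1) = q ^ (m-1) * A"
      unfolding c_fps A_def by (rule fps_nth_power_rescaled) simp
    have BA: "B + real (2*n+1) * c_seq n m = real (2*n+1) * A"
      using c_m by (simp add: field_simps)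
    have "fps_nth (c_fps n ^ (2*n+1) + fps_X * c_fps n ^ (2*n+2)) m =
          fps_nth (c_fps n ^ (2*n+1)) m + fps_nth (c_fps n ^ (2*n+2)) (m-1)"
      using Suc by (simp only: fps_add_nth fps_X_mult_nth) simp
    also have "\<dots> = q ^ m * (real (2*n+1) * A) + q ^ (m-1) * A"
      by (simp only: odd_power even_power BA)
    also have "\<dots> = q ^ (m-1) * A * (1 + q * real (2*n+1))"
      using Suc by (simp add: algebra_simps)
    also have "\<dots> = 0" by (simp add: q_def)
    finally show ?thesis using Suc by simp
  qed
qed

lemma fps_conv_radius_c_fps: "fps_conv_radius (c_fps n) = R_rad n"
proof -
  define q where "q = -1 / real (2*n+1)"
  have "fps_conv_radius (c_fps n) = conv_radius (\<lambda>j. q ^ j * c_seq n j)"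
    by (simp add: fps_conv_radius_def c_fps_def q_def)
  also have "\<dots> = conv_radius (c_seq n) / ereal (1 / real (2*n+1))"
    by (subst conv_radius_mult_power) (simp_all add: q_def)
  also have "\<dots> = R_rad n"
    by (simp add: conv_radius_def R_rad_def divide_ereal_def mult.commute)
  finally show ?thesis .
qed

lemma R_rad_nonneg: "R_rad n \<ge> 0"
  using conv_radius_nonneg by (metis fps_conv_radius_c_fps fps_conv_radius_def)

lemma eval_c_fps_identity:
  assumes "ereal \<bar>z\<bar> < R_rad n"
  shows "eval_fps (c_fps n) z ^ (2*n+1) + z * eval_fps (c_fps n) z ^ (2*n+2) = 1"
proof -
  have r: "norm z < fps_conv_radius (c_fps n)" using assms by (simp add: fps_conv_radius_c_fps)
  have pow: "norm z < fps_conv_radius (c_fps n ^ k)" for k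
    using r fps_conv_radius_power[of "c_fps n" k] by (rule less_le_trans)
  have X_pow: "norm z < fps_conv_radius (fps_X * c_fps n ^ k)" for k
    using pow[of k] fps_conv_radius_mult[of fps_X "c_fps n ^ k"] by (simp add: less_le_trans)
  have "1 = eval_fps (c_fps n ^ (2*n+1) + fps_X * c_fps n ^ (2*n+2)) z"
    by (simp only: c_fps_identity eval_fps_1)
  also have "\<dots> = eval_fps (c_fps n ^ (2*n+1)) z + eval_fps fps_X z * eval_fps (c_fps n ^ (2*n+2)) z"
    by (subst eval_fps_add[OF pow X_pow], subst eval_fps_mult) (use pow[of "2*n+2"] in simp_all)
  finally show ?thesis by (simp only: eval_fps_power[OF r] eval_fps_X)
qed

definition branch_poly :: "nat \<Rightarrow> real \<Rightarrow> real" where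
  "branch_poly n u = u ^ (2*n+1) + u ^ (2*n+2)"

lemma has_real_derivative_branch_poly:
  "(branch_poly n has_real_derivative u ^ (2*n) * (real (2*n+1) + real (2*n+2) * u)) (at u)"
proof -
  have "(branch_poly n has_real_derivative (real (2*n+1) * u ^ (2*n) + real (2*n+2) * u ^ (2*n+1))) (at u)"
    unfolding branch_poly_def using DERIV_pow[of "2*n+1" u] DERIV_pow[of "2*n+2" u]
    by (intro DERIV_add) simp_all
  then show ?thesis by (simp add: algebra_simps)
qed

lemma branch_poly_less_no_zero_between:
  assumes "a < b" and "\<And>x. a < x \<Longrightarrow> x < b \<Longrightarrow> x \<noteq> 0 \<and> x > - real (2*n+1) / real (2*n+2)"
  shows "branch_poly n a < branch_poly n b"
proof (rule DERIV_pos_imp_increasing_open[OF assms(1)])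
  fix x assume "a < x" "x < b"
  then have "x \<noteq> 0" and "x > - real (2*n+1) / real (2*n+2)" using assms(2) by auto
  then have "x ^ (2*n) > 0" and "real (2*n+1) + real (2*n+2) * x > 0"
    by (auto simp: zero_less_power_eq field_simps)
  then show "\<exists>d. (branch_poly n has_real_derivative d) (at x) \<and> d > 0"
    using has_real_derivative_branch_poly mult_pos_pos by blast
qed (auto simp: branch_poly_def intro!: continuous_intros)

lemma strict_mono_on_branch_poly:
  "strict_mono_on {- real (2*n+1) / real (2*n+2)<..} (branch_poly n)"
proof (rule strict_mono_onI)
  fix u v :: real
  assume "u \<in> {- real (2*n+1) / real (2*n+2)<..}" "u < v"
  moreover have "- real (2*n+1) / real (2*n+2) < 0" by (rule divide_neg_pos) auto
  ultimately consider "v \<le> 0 \<or> 0 \<le> u" | "u < 0" "0 < v" "- real (2*n+1) / real (2*n+2) < u" by force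
  then show "branch_poly n u < branch_poly n v"
  proof cases
    case 1 with \<open>u < v\<close> \<open>u \<in> _\<close> show ?thesis by (intro branch_poly_less_no_zero_between) auto
  next
    case 2
    then have "branch_poly n u < branch_poly n 0" by (intro branch_poly_less_no_zero_between) auto
    also have "\<dots> < branch_poly n v" using 2 by (intro branch_poly_less_no_zero_between) auto
    finally show ?thesis .
  qed
qed

lemma branch_poly_eval_c_fps:
  assumes "ereal \<bar>z\<bar> < R_rad n"
  shows "branch_poly n (z * eval_fps (c_fps n) z) = z ^ (2*n+1)"
proof -
  have "branch_poly n (z * eval_fps (c_fps n) z) =
        z ^ (2*n+1) * (eval_fps (c_fps n) z ^ (2*n+1) + z * eval_fps (c_fps n) z ^ (2*n+2))"
    by (simp add: branch_poly_def power_mult_distrib algebra_simps)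
  then show ?thesis using eval_c_fps_identity[OF assms] by simp
qed

lemma eval_c_fps_ne_critical:
  assumes x: "ereal \<bar>x\<bar> < R_rad n"
  shows "x * eval_fps (c_fps n) x \<noteq> - real (2*n+1) / real (2*n+2)"
proof
  define \<phi> where "\<phi> = (\<lambda>z. z * eval_fps (c_fps n) z)"
  assume crit: "x * eval_fps (c_fps n) x = - real (2*n+1) / real (2*n+2)"
  have r: "norm x < fps_conv_radius (c_fps n)" using x by (simp add: fps_conv_radius_c_fps)
  obtain d where "(\<phi> has_real_derivative d) (at x)"
    unfolding \<phi>_def using DERIV_mult[OF DERIV_ident has_field_derivative_eval_fps[OF r, of UNIV]] by blast
  from DERIV_chain2[OF has_real_derivative_branch_poly this]
  have "((\<lambda>z. branch_poly n (\<phi> z)) has_real_derivative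
          \<phi> x ^ (2*n) * (real (2*n+1) + real (2*n+2) * \<phi> x) * d) (at x)" .
  moreover have "real (2*n+1) + real (2*n+2) * \<phi> x = 0"
    using crit by (simp add: \<phi>_def field_simps)
  ultimately have "((\<lambda>z. branch_poly n (\<phi> z)) has_real_derivative 0) (at x)" by simp
  then have "((\<lambda>z. z ^ (2*n+1)) has_real_derivative 0) (at x)"
    by (rule has_field_derivative_transform_within_open[where S = "eball 0 (R_rad n)"])
       (use x in \<open>auto simp: \<phi>_def branch_poly_eval_c_fps\<close>)
  with DERIV_pow[of "2*n+1" x] have "real (2*n+1) * x ^ (2*n) = 0"
    using DERIV_unique by fastforce
  then have "x = 0" by simp
  with crit show False by simp
qed

lemma eval_c_fps_gt_critical:
  assumes z: "ereal \<bar>z\<bar> < R_rad n"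
  shows "z * eval_fps (c_fps n) z > - real (2*n+1) / real (2*n+2)"
proof (rule ccontr)
  define \<phi> where "\<phi> = (\<lambda>z. z * eval_fps (c_fps n) z)"
  define uc where "uc = - real (2*n+1) / real (2*n+2)"
  assume "\<not> ?thesis"
  then have le: "\<phi> z \<le> uc" by (simp add: \<phi>_def uc_def)
  have "uc < 0" unfolding uc_def by (rule divide_neg_pos) auto
  have sub: "{min z 0..max z 0} \<subseteq> eball 0 (R_rad n)"
  proof
    fix x assume "x \<in> {min z 0..max z 0}"
    then have "\<bar>x\<bar> \<le> \<bar>z\<bar>" by auto
    then show "x \<in> eball 0 (R_rad n)" using z by simp (meson ereal_less_eq(3) order_le_less_trans)
  qed
  have "continuous_on (eball 0 (R_rad n)) \<phi>"
    unfolding \<phi>_def fps_conv_radius_c_fps[symmetric]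
    by (intro continuous_intros continuous_on_eval_fps) auto
  then have "continuous_on {min z 0..max z 0} \<phi>" using sub by (rule continuous_on_subset)
  then obtain x where "min z 0 \<le> x" "x \<le> max z 0" "\<phi> x = uc"
    using IVT'[of \<phi> z uc 0] IVT2'[of \<phi> z uc 0] le \<open>uc < 0\<close> by (cases "z \<ge> 0") (auto simp: \<phi>_def)
  with sub eval_c_fps_ne_critical[of x n] show False by (auto simp: \<phi>_def uc_def)
qed

lemma eq_root_mult_eval_c_fps:
  assumes z: "ereal \<bar>b * root (2*n+1) s\<bar> < R_rad n"
    and bt: "b * t > - real (2*n+1) / real (2*n+2)"
    and s: "s = t ^ (2*n+1) + b * t ^ (2*n+2)"
  shows "t = root (2*n+1) s * eval_fps (c_fps n) (b * root (2*n+1) s)"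
proof (cases "b = 0")
  case True
  then have "root (2*n+1) s = t"
    using s odd_real_root_power_cancel[of "2*n+1" t] by simp
  with True show ?thesis by (simp add: eval_fps_at_0 c_fps_def)
next
  case False
  define w where "w = root (2*n+1) s"
  have "branch_poly n (b * t) = b ^ (2*n+1) * s"
    by (simp add: branch_poly_def s power_mult_distrib algebra_simps)
  also have "\<dots> = (b * w) ^ (2*n+1)"
    using odd_real_root_pow[of "2*n+1" s] by (simp only: w_def power_mult_distrib) simp
  also have "\<dots> = branch_poly n (b * w * eval_fps (c_fps n) (b * w))"
    using branch_poly_eval_c_fps z by (simp add: w_def)
  finally have "b * t = b * w * eval_fps (c_fps n) (b * w)"
    by (rule inj_onD[OF strict_mono_on_imp_inj_on[OF strict_mono_on_branch_poly]])
       (use bt eval_c_fps_gt_critical[of "b * w"] z in \<open>auto simp: w_def\<close>)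
  with False show ?thesis by (simp add: w_def)
qed

lemma sums_eval_c_fps:
  assumes "ereal \<bar>z\<bar> < R_rad n"
  shows "(\<lambda>j. (-1 / real (2*n+1)) ^ j * c_seq n j * z ^ j) sums eval_fps (c_fps n) z"
proof -
  have "norm z < fps_conv_radius (c_fps n)" using assms by (simp add: fps_conv_radius_c_fps)
  from sums_eval_fps[OF this] show ?thesis by (simp add: c_fps_def)
qed

lemma c_seq_series_inversion:
  assumes z: "ereal \<bar>b * w\<bar> < R_rad n"
    and branch: "real (2*n+2) * (b * t) / real (2*n+1) > -1"
    and w: "w = root (2*n+1) (t ^ (2*n+1) + b * t ^ (2*n+2))"
  shows "summable (\<lambda>j. (- b / real (2*n+1)) ^ j * c_seq n j * w ^ j)
         \<and> t = w * (\<Sum>j. (- b / real (2*n+1)) ^ j * c_seq n j * w ^ j)"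
proof -
  from branch have "- real (2*n+1) < real (2*n+2) * (b * t)"
    by (simp only: pos_less_divide_eq of_nat_0_less_iff zero_less_Suc add_Suc_right add_0_right) simp
  then have "b * t > - real (2*n+1) / real (2*n+2)"
    by (simp add: divide_less_eq mult.commute)
  from eq_root_mult_eval_c_fps[OF z[unfolded w] this refl]
  have "t = w * eval_fps (c_fps n) (b * w)" by (simp only: w)
  moreover have "- b / real (2*n+1) = b * (-1 / real (2*n+1))" by simp
  then have "(-1 / real (2*n+1)) ^ j * c_seq n j * (b * w) ^ j = (- b / real (2*n+1)) ^ j * c_seq n j * w ^ j" for j
    by (simp only: power_mult_distrib mult_ac)
  with sums_eval_c_fps[OF z]
  have "(\<lambda>j. (- b / real (2*n+1)) ^ j * c_seq n j * w ^ j) sums eval_fps (c_fps n) (b * w)"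
    by (simp only:)
  ultimately show ?thesis by (simp add: sums_iff)
qed

lemma ereal_abs_less_of_power_less:
  fixes R :: ereal
  assumes "c > 0" "R \<ge> 0" "ereal (c * \<bar>w\<bar> ^ k) < ereal c * R ^ k"
  shows "ereal \<bar>w\<bar> < R"
proof (cases R)
  case (real r)
  then have "c * \<bar>w\<bar> ^ k < c * r ^ k" using assms(3) by (simp add: ereal_power)
  then have "\<bar>w\<bar> ^ k < r ^ k" using assms(1) by simp
  then show ?thesis using power_less_imp_less_base real assms(2) by auto
qed (use assms in auto)

theorem lemmaA2:
  fixes n :: nat and I :: "real set" and xs ys a1 :: real and y a2 :: "real \<Rightarrow> real"
  assumes n: "n \<ge> 1"
    and I: "is_interval I" and xsI: "xs \<in> I"
    and yC: "C_k_1 (2*n+1) I y"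
    and a1: "a1 > 0"
    and a2: "continuous_on I a2"
    and yeq: "\<And>x. x \<in> I \<Longrightarrow> y x = ys + a1 * (x - xs)^(2*n+1) + a2 x * (x - xs)^(2*n+2)"
  defines "J \<equiv> {x \<in> I. ereal (\<bar>a2 x\<bar>^(2*n+1) * \<bar>y x - ys\<bar>) < ereal (a1^(2*n+2)) * R_rad n ^ (2*n+1)
                       \<and> (real (2*n+2) * a2 x * (x - xs)) / (real (2*n+1) * a1) > -1}"
  shows "\<forall>x \<in> connected_component_set J xs.
           summable (\<lambda>j. (- a2 x / (real (2*n+1) * a1))^j * c_seq n j * (root (2*n+1) ((y x - ys) / a1))^j)
         \<and> x - xs = root (2*n+1) ((y x - ys) / a1) *
             (\<Sum>j. (- a2 x / (real (2*n+1) * a1))^j * c_seq n j * (root (2*n+1) ((y x - ys) / a1))^j)"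
proof
  fix x assume "x \<in> connected_component_set J xs"
  then have xI: "x \<in> I"
    and bound: "ereal (\<bar>a2 x\<bar>^(2*n+1) * \<bar>y x - ys\<bar>) < ereal (a1^(2*n+2)) * R_rad n ^ (2*n+1)"
    and branch: "(real (2*n+2) * a2 x * (x - xs)) / (real (2*n+1) * a1) > -1"
    using connected_component_subset by (auto simp: J_def)
  define b where "b = a2 x / a1"
  define w where "w = root (2*n+1) ((y x - ys) / a1)"
  have "\<bar>w\<bar>^(2*n+1) = \<bar>y x - ys\<bar> / a1"
    using a1 by (simp add: w_def power_abs[symmetric] odd_real_root_pow del: power_Suc)
  then have scaled: "a1^(2*n+2) * \<bar>b * w\<bar>^(2*n+1) = \<bar>a2 x\<bar>^(2*n+1) * \<bar>y x - ys\<bar>"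
    using a1 by (simp add: b_def abs_mult abs_divide power_mult_distrib power_divide del: power_Suc) simp
  have z: "ereal \<bar>b * w\<bar> < R_rad n"
  proof (rule ereal_abs_less_of_power_less[where c = "a1^(2*n+2)" and k = "2*n+1"])
    show "ereal (a1^(2*n+2) * \<bar>b * w\<bar>^(2*n+1)) < ereal (a1^(2*n+2)) * R_rad n ^ (2*n+1)"
      unfolding scaled by (rule bound)
  qed (use a1 R_rad_nonneg in auto)
  have "real (2*n+2) * (b * (x - xs)) / real (2*n+1) > -1"
    using branch a1 by (simp add: b_def mult_ac)
  moreover have "w = root (2*n+1) ((x - xs)^(2*n+1) + b * (x - xs)^(2*n+2))"
    using yeq[OF xI] a1 by (simp add: w_def b_def field_simps)
  moreover have "- a2 x / (real (2*n+1) * a1) = - b / real (2*n+1)"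
    by (simp add: b_def)
  ultimately show "summable (\<lambda>j. (- a2 x / (real (2*n+1) * a1))^j * c_seq n j * w^j)
         \<and> x - xs = w * (\<Sum>j. (- a2 x / (real (2*n+1) * a1))^j * c_seq n j * w^j)"
    using c_seq_series_inversion[OF z] by simp
qed

end
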